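(* Let $\mathcal{R}$ be a tolerance relation on $X=\{1,\dots,n\}$ whose graph $G(\mathcal{R})$ is chordal, and let $\mathcal{C}$ be the set of maximal cliques of $G(\mathcal{R})$. Then the map $$\Phi: E(\mathcal{R})^d\to \bigoplus_{C\in\mathcal{C}} M_{|C|}(\mathbb{C}),\qquad (x_{ij})\mapsto \big((x_{ij})_{i,j\in C}\big)_{C\in\mathcal{C}}$$ is a complete order embedding, i.e. for every $m$ the map $\Phi_m$ (entrywise application of $\Phi$) is injective and an element $M\in M_m(E(\mathcal{R})^d)$ lies in $M_m(E(\mathcal{R})^d)_+$ if and only if $\Phi_m(M)$ is positive in the $C^*$-algebra $M_m\big(\bigoplus_{C\in\mathcal{C}}M_{|C|}(\mathbb{C})\big)$.
   Context: A tolerance relation on $X=\{1,\dots,n\}$ is a reflexive symmetric relation $\mathcal{R}\subseteq X\times X$; its graph $G(\mathcal{R})$ has vertex set $X$ and an edge between distinct $i,j$ iff $(i,j)\in\mathcal{R}$. A graph is chordal if every cycle of length at least 4 has a chord (an edge joining two vertices not adjacent in the cycle). The operator system $E(\mathcal{R})=\{(x_{ij})\in M_n(\mathbb{C})\mid x_{ij}=0 \text{ if }(i,j)\notin\mathcal{R}\}$ carries the matrix order inherited from $M_n(\mathbb{C})$. Its dual operator system $E(\mathcal{R})^d$ is identified (via the Hilbert–Schmidt pairing) with the $*$-vector space $E(\mathcal{R})$ (usual conjugate transpose) equipped with the matrix order $$M_m(E(\mathcal{R})^d)_+=\{M\in M_m(E(\mathcal{R}))\mid \exists N\in M_m(E(\mathcal{R})^\perp),\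 M+N\in M_{mn}(\mathbb{C})_+\},$$ where $E(\mathcal{R})^\perp=\{(y_{ij})\in M_n(\mathbb{C})\mid y_{ij}=0\text{ for }(i,j)\in\mathcal{R}\}$ is the Hilbert–Schmidt orthogonal complement and $M_m(M_n(\mathbb{C}))\cong M_{mn}(\mathbb{C})$ canonically; the identity matrix serves as matrix order unit. In the direct sum, matrices in the $C$-component are indexed by $C$. *)

theory Defs
  imports Complex_Main
begin

definition psd_on :: "'i set \<Rightarrow> ('i \<Rightarrow> 'i \<Rightarrow> complex) \<Rightarrow> bool" where
  "psd_on I A \<longleftrightarrow> (\<forall>x\<in>I. \<forall>y\<in>I. A y x = cnj (A x y)) \<and>
     (\<forall>v. Im (\<Sum>x\<in>I. \<Sum>y\<in>I. cnj (v x) * A x y * v y) = 0 \<and>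
          0 \<le> Re (\<Sum>x\<in>I. \<Sum>y\<in>I. cnj (v x) * A x y * v y))"

definition tolerance_relation :: "nat \<Rightarrow> (nat \<times> nat) set \<Rightarrow> bool" where
  "tolerance_relation n R \<longleftrightarrow> R \<subseteq> {1..n} \<times> {1..n} \<and> refl_on {1..n} R \<and> sym R"

definition graph_adj :: "(nat \<times> nat) set \<Rightarrow> nat \<Rightarrow> nat \<Rightarrow> bool" where
  "graph_adj R i j \<longleftrightarrow> i \<noteq> j \<and> (i, j) \<in> R"

definition is_cycle :: "(nat \<times> nat) set \<Rightarrow> nat list \<Rightarrow> bool" where
  "is_cycle R vs \<longleftrightarrow> distinct vs \<and> 3 \<le> length vs \<and>
     (\<forall>i<length vs. graph_adj R (vs ! i) (vs ! ((i + 1) mod length vs)))"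

definition has_chord :: "(nat \<times> nat) set \<Rightarrow> nat list \<Rightarrow> bool" where
  "has_chord R vs \<longleftrightarrow> (\<exists>i<length vs. \<exists>j<length vs. i \<noteq> j \<and>
      j \<noteq> (i + 1) mod length vs \<and> i \<noteq> (j + 1) mod length vs \<and>
      graph_adj R (vs ! i) (vs ! j))"

definition chordal :: "nat \<Rightarrow> (nat \<times> nat) set \<Rightarrow> bool" where
  "chordal n R \<longleftrightarrow> (\<forall>vs. set vs \<subseteq> {1..n} \<longrightarrow> is_cycle R vs \<longrightarrow> 4 \<le> length vs \<longrightarrow> has_chord R vs)"

definition is_clique :: "(nat \<times> nat) set \<Rightarrow> nat set \<Rightarrow> bool" where
  "is_clique R C \<longleftrightarrow> (\<forall>i\<in>C. \<forall>j\<in>C. i \<noteq> j \<longrightarrow> graph_adj R i j)"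

definition maximal_cliques :: "nat \<Rightarrow> (nat \<times> nat) set \<Rightarrow> nat set set" where
  "maximal_cliques n R = {C. C \<subseteq> {1..n} \<and> is_clique R C \<and>
      (\<forall>D. C \<subseteq> D \<and> D \<subseteq> {1..n} \<and> is_clique R D \<longrightarrow> D = C)}"

text \<open>Elements of M_m(M_n): M k l i j is entry (i,j) of block (k,l); it corresponds to the
  entry ((k,i),(l,j)) of M_{mn} under M_m(M_n) = M_{mn}.\<close>

definition Mm_E :: "nat \<Rightarrow> (nat \<times> nat) set \<Rightarrow> nat \<Rightarrow> (nat \<Rightarrow> nat \<Rightarrow> nat \<Rightarrow> nat \<Rightarrow> complex) set" where
  "Mm_E n R m = {M. \<forall>k l i j. M k l i j \<noteq> 0 \<longrightarrow> k < m \<and> l < m \<and> i \<in> {1..n} \<and> j \<in> {1..n} \<and> (i, j) \<in> R}"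

definition Mm_Eperp :: "nat \<Rightarrow> (nat \<times> nat) set \<Rightarrow> nat \<Rightarrow> (nat \<Rightarrow> nat \<Rightarrow> nat \<Rightarrow> nat \<Rightarrow> complex) set" where
  "Mm_Eperp n R m = {N. \<forall>k l i j. N k l i j \<noteq> 0 \<longrightarrow> k < m \<and> l < m \<and> i \<in> {1..n} \<and> j \<in> {1..n} \<and> (i, j) \<notin> R}"

definition dual_pos :: "nat \<Rightarrow> (nat \<times> nat) set \<Rightarrow> nat \<Rightarrow> (nat \<Rightarrow> nat \<Rightarrow> nat \<Rightarrow> nat \<Rightarrow> complex) \<Rightarrow> bool" where
  "dual_pos n R m M \<longleftrightarrow> M \<in> Mm_E n R m \<and>
     (\<exists>N \<in> Mm_Eperp n R m. psd_on ({..<m} \<times> {1..n}) (\<lambda>(k, i) (l, j). M k l i j + N k l i j))"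

text \<open>The map Phi into the direct sum, an element of which is a family C \<mapsto> (matrix indexed by C).\<close>
definition Phi :: "nat \<Rightarrow> (nat \<times> nat) set \<Rightarrow> (nat \<Rightarrow> nat \<Rightarrow> complex) \<Rightarrow> (nat set \<Rightarrow> nat \<Rightarrow> nat \<Rightarrow> complex)" where
  "Phi n R x = (\<lambda>C i j. if C \<in> maximal_cliques n R \<and> i \<in> C \<and> j \<in> C then x i j else 0)"

definition Phi_m :: "nat \<Rightarrow> (nat \<times> nat) set \<Rightarrow> nat \<Rightarrow> (nat \<Rightarrow> nat \<Rightarrow> nat \<Rightarrow> nat \<Rightarrow> complex)
     \<Rightarrow> (nat \<Rightarrow> nat \<Rightarrow> nat set \<Rightarrow> nat \<Rightarrow> nat \<Rightarrow> complex)" where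
  "Phi_m n R m M = (\<lambda>k l. if k < m \<and> l < m then Phi n R (M k l) else (\<lambda>_ _ _. 0))"

text \<open>Positivity in the C*-algebra M_m(\<Oplus>_C M_|C|), realised concretely as block-diagonal
  matrices inside M_m(M_N) with N = \<Sum>_C |C|, indices (k,(C,i)).\<close>
definition dsum_pos :: "nat \<Rightarrow> (nat \<times> nat) set \<Rightarrow> nat \<Rightarrow> (nat \<Rightarrow> nat \<Rightarrow> nat set \<Rightarrow> nat \<Rightarrow> nat \<Rightarrow> complex) \<Rightarrow> bool" where
  "dsum_pos n R m P \<longleftrightarrow>
     psd_on {(k, C, i). k < m \<and> C \<in> maximal_cliques n R \<and> i \<in> C}
       (\<lambda>(k, C, i) (l, D, j). if C = D then P k l C i j else 0)"

end

theory Submission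
  imports Defs
begin

text \<open>Injectivity of \<open>\<Phi>\<close> holds because every pattern entry \<open>(i, j) \<in> R\<close>
  lies in a maximal clique, and positivity in the direct sum is positivity of each clique block.
  So the theorem says that \<open>M\<close> has a positive completion \<open>M + N\<close> (with \<open>N\<close> supported off the
  pattern) iff all its maximal-clique blocks are positive. Necessity is restriction to principal
  submatrices. Sufficiency is the positive completion theorem for chordal patterns: by Dirac's
  lemma a non-complete chordal graph has a clique separator \<open>S\<close> between two parts \<open>A\<close>, \<open>B\<close>;
  completions on \<open>A \<union> S\<close> and \<open>S \<union> B\<close> (by induction) agree on the clique \<open>S\<close>, and two positive
  matrices agreeing on their overlap glue to a positive matrix, as one sees by eliminating the
  overlap one pivot at a time with Schur complements.\<close>

section \<open>Positive semidefinite matrices\<close>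

definition quad_form :: "'i set \<Rightarrow> ('i \<Rightarrow> 'i \<Rightarrow> complex) \<Rightarrow> ('i \<Rightarrow> complex) \<Rightarrow> complex" where
  "quad_form I A v = (\<Sum>x\<in>I. \<Sum>y\<in>I. cnj (v x) * A x y * v y)"

definition hermitian_on :: "'i set \<Rightarrow> ('i \<Rightarrow> 'i \<Rightarrow> complex) \<Rightarrow> bool" where
  "hermitian_on I A \<longleftrightarrow> (\<forall>x\<in>I. \<forall>y\<in>I. A y x = cnj (A x y))"

lemma psd_on_iff:
  "psd_on I A \<longleftrightarrow> hermitian_on I A \<and> (\<forall>v. Im (quad_form I A v) = 0 \<and> 0 \<le> Re (quad_form I A v))"
  unfolding psd_on_def hermitian_on_def quad_form_def by blast

lemma quad_form_zero_extend:
  assumes "finite I" "J \<subseteq> I"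
  shows "quad_form I A (\<lambda>x. if x \<in> J then v x else 0) = quad_form J A v"
proof -
  have "quad_form I A (\<lambda>x. if x \<in> J then v x else 0) =
     (\<Sum>x\<in>I. if x \<in> J then (\<Sum>y\<in>I. if y \<in> J then cnj (v x) * A x y * v y else 0) else 0)"
    unfolding quad_form_def by (intro sum.cong refl) (auto intro!: sum.cong)
  also have "\<dots> = quad_form J A v"
    unfolding quad_form_def using assms by (simp add: sum.inter_restrict[symmetric] Int_absorb1)
  finally show ?thesis .
qed

lemma psd_on_subset:
  assumes "psd_on I A" "finite I" "J \<subseteq> I"
  shows "psd_on J A"
  using assms unfolding psd_on_iff
  by (auto simp: hermitian_on_def) (metis quad_form_zero_extend assms(2,3))+

lemma psd_on_cong:
  assumes "psd_on I A" "\<And>x y. x \<in> I \<Longrightarrow> y \<in> I \<Longrightarrow> A x y = B x y"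
  shows "psd_on I B"
proof -
  have "quad_form I A v = quad_form I B v" for v
    unfolding quad_form_def using assms(2) by (auto intro!: sum.cong)
  moreover have "hermitian_on I B"
    using assms unfolding psd_on_iff hermitian_on_def by metis
  ultimately show ?thesis using assms(1) unfolding psd_on_iff by metis
qed

lemma psd_on_reindex:
  assumes "inj_on f I"
  shows "psd_on (f ` I) A \<longleftrightarrow> psd_on I (\<lambda>x y. A (f x) (f y))"
proof -
  have qf: "quad_form (f ` I) A w = quad_form I (\<lambda>x y. A (f x) (f y)) (w \<circ> f)" for w
    unfolding quad_form_def using assms by (simp add: sum.reindex)
  have "quad_form I (\<lambda>x y. A (f x) (f y)) v = quad_form (f ` I) A (v \<circ> inv_into I f)" for v
  proof -
    have "quad_form I (\<lambda>x y. A (f x) (f y)) v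
        = quad_form I (\<lambda>x y. A (f x) (f y)) ((v \<circ> inv_into I f) \<circ> f)"
      unfolding quad_form_def using assms by (intro sum.cong refl) (auto intro!: sum.cong)
    then show ?thesis using qf by metis
  qed
  then show ?thesis
    unfolding psd_on_iff hermitian_on_def using qf by (auto simp del: o_apply) metis+
qed

lemma psd_on_diag:
  assumes "psd_on I A" "finite I" "s \<in> I"
  shows "Im (A s s) = 0" "0 \<le> Re (A s s)"
proof -
  have "quad_form I A (\<lambda>x. if x \<in> {s} then 1 else 0) = A s s"
    using quad_form_zero_extend[of I "{s}" A "\<lambda>_. 1"] assms by (simp add: quad_form_def)
  then show "Im (A s s) = 0" "0 \<le> Re (A s s)" using assms(1) unfolding psd_on_iff by metis+
qed

lemma psd_on_diag_zero_imp_col_zero: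
  assumes "psd_on I A" "finite I" "s \<in> I" "A s s = 0" "x \<in> I"
  shows "A x s = 0"
proof (rule ccontr)
  assume ne: "A x s \<noteq> 0"
  then have xs: "x \<noteq> s" using assms by auto
  have h: "A s x = cnj (A x s)" using assms(1,3,5) unfolding psd_on_iff hermitian_on_def by blast
  define c where "c = A x s"
  \<comment> \<open>test vector \<open>e\<^sub>x + \<mu> e\<^sub>s\<close>, with \<open>c \<mu>\<close> real and below \<open>-Re (A x x)\<close>\<close>
  define t :: real where "t = (Re (A x x) + 1) / (cmod c)\<^sup>2"
  define \<mu> where "\<mu> = - of_real t * cnj c"
  have "c * \<mu> = - of_real (t * (cmod c)\<^sup>2)"
  proof -
    have "c * cnj c = of_real ((cmod c)\<^sup>2)" by (metis complex_norm_square of_real_power)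
    then show ?thesis unfolding \<mu>_def by (simp add: ac_simps)
  qed
  also have "t * (cmod c)\<^sup>2 = Re (A x x) + 1" unfolding t_def using ne c_def by simp
  finally have cm: "c * \<mu> = - of_real (Re (A x x) + 1)" .
  have "quad_form I A (\<lambda>y. if y \<in> {x, s} then (if y = x then 1 else \<mu>) else 0)
      = A x x + c * \<mu> + cnj (c * \<mu>)"
    using quad_form_zero_extend[of I "{x,s}"] assms xs h unfolding c_def
    by (simp add: quad_form_def mult.commute)
  then have "0 \<le> Re (A x x + c * \<mu> + cnj (c * \<mu>))"
    using assms(1) unfolding psd_on_iff by metis
  then show False using cm psd_on_diag(2)[OF assms(1,2,5)] by simp
qed

text \<open>For a vanishing pivot \<open>A s s = 0\<close>, division by zero makes \<open>schur A s = A\<close>; this is the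
  right convention for positive matrices, whose column \<open>s\<close> then vanishes.\<close>
definition schur :: "('i \<Rightarrow> 'i \<Rightarrow> complex) \<Rightarrow> 'i \<Rightarrow> 'i \<Rightarrow> 'i \<Rightarrow> complex" where
  "schur A s = (\<lambda>x y. A x y - A x s * A s y / A s s)"

lemma hermitian_on_schur:
  assumes "hermitian_on I A" "s \<in> I" "Im (A s s) = 0"
  shows "hermitian_on (I - {s}) (schur A s)"
  unfolding hermitian_on_def
proof (intro ballI)
  fix x y assume xy: "x \<in> I - {s}" "y \<in> I - {s}"
  have h: "A y x = cnj (A x y)" "A y s = cnj (A s y)" "A s x = cnj (A x s)"
    using assms(1,2) xy unfolding hermitian_on_def by blast+
  have "cnj (A s s) = A s s" using assms(3) by (simp add: complex_eq_iff)
  show "schur A s y x = cnj (schur A s x y)"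
    unfolding schur_def h(1-3) by (simp add: \<open>cnj (A s s) = A s s\<close> mult.commute)
qed

lemma sum_cnj_hermitian_row:
  assumes "hermitian_on (insert s J) A"
  shows "(\<Sum>x\<in>J. cnj (v x) * A x s) = cnj (\<Sum>y\<in>J. A s y * v y)"
proof -
  have "A x s = cnj (A s x)" if "x \<in> J" for x
    using assms that unfolding hermitian_on_def by blast
  then show ?thesis by (simp add: mult.commute)
qed

lemma quad_form_split:
  fixes v :: "'i \<Rightarrow> complex"
  assumes "finite I" "s \<in> I" "hermitian_on I A"
  defines "a \<equiv> \<Sum>y\<in>I - {s}. A s y * v y"
  shows "quad_form I A v = cnj (v s) * A s s * v s + cnj (v s) * a + cnj a * v s
      + quad_form (I - {s}) A v"
proof -
  have r: "\<And>g. sum g I = g s + sum g (I - {s})" using sum.remove[OF assms(1,2)] by blast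
  have ins: "insert s (I - {s}) = I" using assms(2) by blast
  have "quad_form I A v = (\<Sum>x\<in>I. cnj (v x) * A x s * v s + (\<Sum>y\<in>I-{s}. cnj (v x) * A x y * v y))"
    unfolding quad_form_def by (intro sum.cong refl) (rule r)
  also have "\<dots> = (cnj (v s) * A s s * v s + (\<Sum>y\<in>I-{s}. cnj (v s) * A s y * v y))
      + ((\<Sum>x\<in>I-{s}. cnj (v x) * A x s) * v s + quad_form (I - {s}) A v)"
    unfolding quad_form_def by (subst r) (simp add: sum.distrib sum_distrib_right)
  also have "(\<Sum>x\<in>I-{s}. cnj (v x) * A x s) = cnj a"
    unfolding a_def using sum_cnj_hermitian_row[of s "I - {s}" A v] assms(3) ins by simp
  also have "(\<Sum>y\<in>I-{s}. cnj (v s) * A s y * v y) = cnj (v s) * a"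
    unfolding a_def by (simp add: sum_distrib_left mult.assoc)
  finally show ?thesis by (simp add: algebra_simps)
qed

lemma complete_square:
  "(d::complex) \<noteq> 0 \<Longrightarrow> d * (x + b / d) * (y + c / d) = x * d * y + x * c + b * y + b * c / d"
  by (simp add: divide_simps, algebra)

lemma quad_form_schur:
  fixes v :: "'i \<Rightarrow> complex"
  assumes "finite I" "s \<in> I" "hermitian_on I A" "Im (A s s) = 0" "A s s \<noteq> 0"
  defines "d \<equiv> A s s" and "a \<equiv> \<Sum>y\<in>I - {s}. A s y * v y"
  shows "quad_form I A v = d * cnj (v s + a / d) * (v s + a / d) + quad_form (I - {s}) (schur A s) v"
proof -
  have ins: "insert s (I - {s}) = I" using assms(2) by blast
  have cd: "cnj d = d" using assms(4) unfolding d_def by (simp add: complex_eq_iff)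
  have "quad_form (I - {s}) (schur A s) v = quad_form (I - {s}) A v
      - (\<Sum>x\<in>I-{s}. \<Sum>y\<in>I-{s}. cnj (v x) * A x s * (A s y * v y) / d)"
    unfolding quad_form_def schur_def d_def by (simp add: sum_subtractf algebra_simps)
  also have "(\<Sum>x\<in>I-{s}. \<Sum>y\<in>I-{s}. cnj (v x) * A x s * (A s y * v y) / d)
      = (\<Sum>x\<in>I-{s}. cnj (v x) * A x s) * a / d"
    unfolding a_def by (simp add: sum_product sum_divide_distrib mult.assoc)
  also have "(\<Sum>x\<in>I-{s}. cnj (v x) * A x s) = cnj a"
    unfolding a_def using sum_cnj_hermitian_row[of s "I - {s}" A v] assms(3) ins by simp
  finally have "quad_form (I - {s}) (schur A s) v = quad_form (I - {s}) A v - cnj a * a / d" .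
  moreover have "d * cnj (v s + a / d) * (v s + a / d)
      = cnj (v s) * d * v s + cnj (v s) * a + cnj a * v s + cnj a * a / d"
    using complete_square[of d "cnj (v s)" "cnj a" "v s" a] assms(5) cd unfolding d_def
    by simp
  ultimately show ?thesis
    using quad_form_split[OF assms(1-3), of v] unfolding a_def[symmetric] d_def[symmetric] by simp
qed

lemma psd_on_pivot:
  assumes "psd_on I A" "finite I" "s \<in> I"
  shows "0 < Re (A s s) \<or> (\<forall>x\<in>I. A x s = 0)"
proof (cases "0 < Re (A s s)")
  case False
  then have "A s s = 0" using psd_on_diag[OF assms] by (simp add: complex_eq_iff)
  then show ?thesis using psd_on_diag_zero_imp_col_zero[OF assms] by blast
qed simp

lemma psd_on_iff_schur:
  assumes "finite I" "s \<in> I" "hermitian_on I A" "Im (A s s) = 0"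
    and pivot: "0 < Re (A s s) \<or> (\<forall>x\<in>I. A x s = 0)"
  shows "psd_on I A \<longleftrightarrow> psd_on (I - {s}) (schur A s)"
proof (cases "0 < Re (A s s)")
  case True
  then have nz: "A s s \<noteq> 0" by auto
  define d where "d = A s s"
  let ?a = "\<lambda>v. \<Sum>y\<in>I - {s}. A s y * v y"
  have key: "quad_form I A v = d * cnj (v s + ?a v / d) * (v s + ?a v / d)
      + quad_form (I - {s}) (schur A s) v" for v
    using quad_form_schur[OF assms(1-4) nz] unfolding d_def by blast
  have sq: "Im (d * cnj z * z) = 0 \<and> 0 \<le> Re (d * cnj z * z)" for z
  proof -
    have "d = of_real (Re d)" using assms(4) unfolding d_def by (simp add: complex_eq_iff)
    then have "d * cnj z * z = of_real (Re d * (cmod z)\<^sup>2)"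
      by (metis (no_types) complex_norm_square mult.assoc mult.commute of_real_mult of_real_power)
    then show ?thesis using True unfolding d_def by simp
  qed
  show ?thesis
  proof
    assume p: "psd_on I A"
    show "psd_on (I - {s}) (schur A s)" unfolding psd_on_iff
    proof (intro conjI allI hermitian_on_schur assms)
      fix v
      \<comment> \<open>the pivot coordinate that kills the square\<close>
      define w where "w = v(s := - ?a v / d)"
      have "?a w = ?a v" "quad_form (I - {s}) (schur A s) w = quad_form (I - {s}) (schur A s) v"
        unfolding w_def quad_form_def by (auto intro!: sum.cong)
      then have "quad_form I A w = quad_form (I - {s}) (schur A s) v"
        using key[of w] unfolding w_def by simp
      then show "Im (quad_form (I - {s}) (schur A s) v) = 0"
          "0 \<le> Re (quad_form (I - {s}) (schur A s) v)"
        using p unfolding psd_on_iff by metis+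
    qed
  next
    assume p: "psd_on (I - {s}) (schur A s)"
    show "psd_on I A" unfolding psd_on_iff
    proof (intro conjI allI assms(3))
      fix v
      show "Im (quad_form I A v) = 0" "0 \<le> Re (quad_form I A v)"
        using key[of v] sq[of "v s + ?a v / d"] p unfolding psd_on_iff by auto
    qed
  qed
next
  case False
  then have col: "\<forall>x\<in>I. A x s = 0" using pivot by auto
  then have row: "\<forall>y\<in>I. A s y = 0"
    using assms(2,3) unfolding hermitian_on_def by (metis complex_cnj_zero)
  have "schur A s = A" unfolding schur_def using col assms(2) by (auto simp: fun_eq_iff)
  moreover have "quad_form I A v = quad_form (I - {s}) A v" for v
    using quad_form_split[OF assms(1-3), of v] row col assms(2) by simp
  moreover have "hermitian_on (I - {s}) A" using assms(3) unfolding hermitian_on_def by blast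
  ultimately show ?thesis using assms(3) unfolding psd_on_iff by metis
qed

section \<open>Gluing positive matrices along a common block\<close>

lemma psd_on_blocks:
  assumes fin: "finite D"
    and off: "\<And>x y. x \<in> D \<Longrightarrow> y \<in> D \<Longrightarrow> \<kappa> x \<noteq> \<kappa> y \<Longrightarrow> A x y = 0"
    and blocks: "\<And>c. c \<in> \<kappa> ` D \<Longrightarrow> psd_on {x \<in> D. \<kappa> x = c} A"
  shows "psd_on D A"
proof -
  have "hermitian_on D A" unfolding hermitian_on_def
  proof (intro ballI)
    fix x y assume xy: "x \<in> D" "y \<in> D"
    show "A y x = cnj (A x y)"
    proof (cases "\<kappa> x = \<kappa> y")
      case True
      have "hermitian_on {z \<in> D. \<kappa> z = \<kappa> x} A" using blocks[of "\<kappa> x"] xy psd_on_iff by blast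
      moreover have "x \<in> {z \<in> D. \<kappa> z = \<kappa> x}" "y \<in> {z \<in> D. \<kappa> z = \<kappa> x}" using xy True by auto
      ultimately show ?thesis unfolding hermitian_on_def by blast
    next
      case False
      then show ?thesis using off xy by (metis complex_cnj_zero)
    qed
  qed
  moreover have "Im (quad_form D A v) = 0 \<and> 0 \<le> Re (quad_form D A v)" for v
  proof -
    define F where "F x y = cnj (v x) * A x y * v y" for x y
    have "(\<Sum>y\<in>D. F x y) = (\<Sum>y\<in>{y \<in> D. \<kappa> y = \<kappa> x}. F x y)" if "x \<in> D" for x
    proof (rule sum.mono_neutral_right[OF fin])
      show "\<forall>y\<in>D - {y \<in> D. \<kappa> y = \<kappa> x}. F x y = 0"
        using off[OF that] unfolding F_def by (metis (mono_tags) DiffE mem_Collect_eq mult_zero_right mult_zero_left)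
    qed auto
    then have "quad_form D A v = (\<Sum>x\<in>D. \<Sum>y\<in>{y \<in> D. \<kappa> y = \<kappa> x}. F x y)"
      unfolding quad_form_def F_def by (rule sum.cong[OF refl])
    also have "\<dots> = (\<Sum>c\<in>\<kappa> ` D. \<Sum>x\<in>{x \<in> D. \<kappa> x = c}. \<Sum>y\<in>{y \<in> D. \<kappa> y = \<kappa> x}. F x y)"
      by (rule sum.group[where g=\<kappa>, OF fin finite_imageI[OF fin] subset_refl, symmetric])
    also have "\<dots> = (\<Sum>c\<in>\<kappa> ` D. quad_form {x \<in> D. \<kappa> x = c} A v)"
      unfolding quad_form_def F_def by (intro sum.cong refl) auto
    finally have e: "quad_form D A v = (\<Sum>c\<in>\<kappa> ` D. quad_form {x \<in> D. \<kappa> x = c} A v)" .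
    have "\<And>c. c \<in> \<kappa> ` D \<Longrightarrow> Im (quad_form {x \<in> D. \<kappa> x = c} A v) = 0"
      "\<And>c. c \<in> \<kappa> ` D \<Longrightarrow> 0 \<le> Re (quad_form {x \<in> D. \<kappa> x = c} A v)"
      using blocks psd_on_iff by blast+
    then show ?thesis unfolding e Im_sum Re_sum by (auto intro: sum_nonneg simp del: image_iff)
  qed
  ultimately show ?thesis unfolding psd_on_iff by blast
qed

text \<open>Inverse of \<open>schur\<close>: the Hermitian matrix with pivot \<open>d\<close> and pivot row \<open>r\<close> at \<open>s\<close> whose
  Schur complement at \<open>s\<close> is \<open>W\<close>.\<close>
definition schur_extend ::
    "'i \<Rightarrow> complex \<Rightarrow> ('i \<Rightarrow> complex) \<Rightarrow> ('i \<Rightarrow> 'i \<Rightarrow> complex) \<Rightarrow> 'i \<Rightarrow> 'i \<Rightarrow> complex" where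
  "schur_extend s d r W = (\<lambda>x y. if x = s then (if y = s then d else r y)
     else if y = s then cnj (r x) else W x y + cnj (r x) * r y / d)"

lemma psd_on_schur_extend:
  assumes "psd_on J W" "finite J" "s \<notin> J" "Im d = 0"
    and pivot: "0 < Re d \<or> (d = 0 \<and> (\<forall>y\<in>J. r y = 0))"
  shows "psd_on (insert s J) (schur_extend s d r W)"
proof -
  let ?A = "schur_extend s d r W"
  have ss: "?A s s = d" by (simp add: schur_extend_def)
  have J: "insert s J - {s} = J" using assms(3) by simp
  have cd: "cnj d = d" using assms(4) by (simp add: complex_eq_iff)
  have "hermitian_on J W" using assms(1) psd_on_iff by blast
  then have hW: "W y x = cnj (W x y)" if "x \<in> J" "y \<in> J" for x y
    using that unfolding hermitian_on_def by blast
  have "hermitian_on (insert s J) ?A"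
    unfolding hermitian_on_def
  proof (intro ballI)
    fix x y assume "x \<in> insert s J" "y \<in> insert s J"
    then show "?A y x = cnj (?A x y)"
      using hW[of x y] cd assms(3) by (cases "x = s"; cases "y = s") (auto simp: schur_extend_def mult.commute)
  qed
  moreover have "0 < Re (?A s s) \<or> (\<forall>x\<in>insert s J. ?A x s = 0)"
    using pivot by (auto simp: schur_extend_def)
  moreover have "psd_on J (schur ?A s)"
    using assms(1) by (rule psd_on_cong) (use assms(3) in \<open>auto simp: schur_def schur_extend_def\<close>)
  ultimately show ?thesis
    using psd_on_iff_schur[of "insert s J" s ?A] assms(2,4) ss J by simp
qed

lemma schur_extend_schur:
  assumes "hermitian_on I A" "s \<in> I" "\<forall>y\<in>I. r y = A s y"
    and "\<forall>x\<in>I - {s}. \<forall>y\<in>I - {s}. W x y = schur A s x y"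
    and "x \<in> I" "y \<in> I"
  shows "schur_extend s (A s s) r W x y = A x y"
proof -
  have "A x s = cnj (A s x)" using assms(1,2,5) unfolding hermitian_on_def by blast
  then show ?thesis using assms(2-6) unfolding schur_extend_def schur_def by auto
qed

lemma psd_on_block_diag:
  assumes "finite IA" "finite IB" "IA \<inter> IB = {}" "psd_on IA Q" "psd_on IB P"
  defines "W \<equiv> \<lambda>x y. if x \<in> IA \<and> y \<in> IA then Q x y else if x \<in> IB \<and> y \<in> IB then P x y else 0"
  shows "psd_on (IA \<union> IB) W"
proof (rule psd_on_blocks[where \<kappa>="\<lambda>x. x \<in> IA"])
  have WA: "psd_on IA W" using assms(4) by (rule psd_on_cong) (simp add: W_def)
  have WB: "psd_on IB W" using assms(5) by (rule psd_on_cong) (use assms(3) in \<open>auto simp: W_def\<close>)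
  show "psd_on {x \<in> IA \<union> IB. (x \<in> IA) = c} W" for c
  proof -
    have "{x \<in> IA \<union> IB. (x \<in> IA) = c} = (if c then IA else IB)" using assms(3) by auto
    then show ?thesis using WA WB by simp
  qed
  show "W x y = 0" if "x \<in> IA \<union> IB" "y \<in> IA \<union> IB" "(x \<in> IA) \<noteq> (y \<in> IA)" for x y
    using that assms(3) by (auto simp: W_def)
qed (use assms(1,2) in simp)

lemma psd_on_glue_pivot:
  assumes fin: "finite (IA \<union> S \<union> IB)" and new: "s \<notin> IA \<union> S \<union> IB" and AB: "IA \<inter> IB = {}"
    and pQ: "psd_on (IA \<union> insert s S) Q" and pP: "psd_on (insert s S \<union> IB) P"
    and agree: "\<forall>x\<in>insert s S. \<forall>y\<in>insert s S. Q x y = P x y"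
    and W': "psd_on (IA \<union> S \<union> IB) W'"
      "\<forall>x\<in>IA \<union> S. \<forall>y\<in>IA \<union> S. W' x y = schur Q s x y"
      "\<forall>x\<in>S \<union> IB. \<forall>y\<in>S \<union> IB. W' x y = schur P s x y"
  defines "r \<equiv> \<lambda>y. if y \<in> IA \<union> insert s S then Q s y else P s y"
  shows "psd_on (IA \<union> insert s S \<union> IB) (schur_extend s (Q s s) r W')"
    "\<forall>x\<in>IA \<union> insert s S. \<forall>y\<in>IA \<union> insert s S. schur_extend s (Q s s) r W' x y = Q x y"
    "\<forall>x\<in>insert s S \<union> IB. \<forall>y\<in>insert s S \<union> IB. schur_extend s (Q s s) r W' x y = P x y"
proof -
  define I1 where "I1 = IA \<union> insert s S"
  define I2 where "I2 = insert s S \<union> IB"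
  have fin12: "finite I1" "finite I2" and s: "s \<in> I1" "s \<in> I2"
    using fin unfolding I1_def I2_def by auto
  have hQ: "hermitian_on I1 Q" and hP: "hermitian_on I2 P" using pQ pP psd_on_iff I1_def I2_def by blast+
  define d where "d = Q s s"
  have dP: "P s s = d" using agree d_def by auto
  have dim: "Im d = 0" using psd_on_diag[OF pQ] fin12(1) s(1) d_def I1_def by simp
  have rQ: "\<forall>y\<in>I1. r y = Q s y" and rP: "\<forall>y\<in>I2. r y = P s y"
    using agree AB by (auto simp: r_def I1_def I2_def)
  have "0 < Re d \<or> (d = 0 \<and> (\<forall>y\<in>IA \<union> S \<union> IB. r y = 0))"
  proof (cases "0 < Re d")
    case False
    have "0 < Re (Q s s) \<or> (\<forall>x\<in>I1. Q x s = 0)" "0 < Re (P s s) \<or> (\<forall>x\<in>I2. P x s = 0)"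
      using psd_on_pivot[OF pQ[folded I1_def] fin12(1) s(1)] psd_on_pivot[OF pP[folded I2_def] fin12(2) s(2)] .
    then have colQ: "\<forall>x\<in>I1. Q x s = 0" and colP: "\<forall>x\<in>I2. P x s = 0"
      using False d_def dP by auto
    show ?thesis
    proof (intro disjI2 conjI ballI)
      show "d = 0" using colQ s(1) d_def by simp
      fix y assume "y \<in> IA \<union> S \<union> IB"
      then consider "y \<in> I1" | "y \<in> I2" by (auto simp: I1_def I2_def)
      then show "r y = 0"
      proof cases
        case 1
        then have "Q s y = cnj (Q y s)" using hQ s(1) unfolding hermitian_on_def by blast
        then show ?thesis using rQ colQ 1 by simp
      next
        case 2
        then have "P s y = cnj (P y s)" using hP s(2) unfolding hermitian_on_def by blast
        then show ?thesis using rP colP 2 by simp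
      qed
    qed
  qed simp
  then have "psd_on (insert s (IA \<union> S \<union> IB)) (schur_extend s d r W')"
    using psd_on_schur_extend[OF W'(1) fin new dim] by blast
  moreover have "insert s (IA \<union> S \<union> IB) = IA \<union> insert s S \<union> IB" by blast
  ultimately show "psd_on (IA \<union> insert s S \<union> IB) (schur_extend s (Q s s) r W')"
    unfolding d_def by (simp only:)
  have I1s: "I1 - {s} = IA \<union> S" and I2s: "I2 - {s} = S \<union> IB" using new unfolding I1_def I2_def by auto
  have "schur_extend s d r W' x y = Q x y" if "x \<in> I1" "y \<in> I1" for x y
  proof (rule schur_extend_schur[OF hQ s(1) rQ _ that, folded d_def])
    show "\<forall>x\<in>I1 - {s}. \<forall>y\<in>I1 - {s}. W' x y = schur Q s x y" using W'(2) I1s by simp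
  qed
  then show "\<forall>x\<in>IA \<union> insert s S. \<forall>y\<in>IA \<union> insert s S. schur_extend s (Q s s) r W' x y = Q x y"
    unfolding I1_def d_def by blast
  have "schur_extend s d r W' x y = P x y" if "x \<in> I2" "y \<in> I2" for x y
  proof (rule schur_extend_schur[OF hP s(2) rP _ that, unfolded dP])
    show "\<forall>x\<in>I2 - {s}. \<forall>y\<in>I2 - {s}. W' x y = schur P s x y" using W'(3) I2s by simp
  qed
  then show "\<forall>x\<in>insert s S \<union> IB. \<forall>y\<in>insert s S \<union> IB. schur_extend s (Q s s) r W' x y = P x y"
    unfolding I2_def d_def by blast
qed

text \<open>Eliminate the points of the overlap \<open>S\<close> one at a time by Schur complements.\<close>
lemma psd_on_glue:
  assumes "finite S" "finite IA" "finite IB" "IA \<inter> S = {}" "IB \<inter> S = {}" "IA \<inter> IB = {}"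
    and "psd_on (IA \<union> S) Q" "psd_on (S \<union> IB) P" "\<forall>x\<in>S. \<forall>y\<in>S. Q x y = P x y"
  shows "\<exists>W. psd_on (IA \<union> S \<union> IB) W \<and> (\<forall>x\<in>IA \<union> S. \<forall>y\<in>IA \<union> S. W x y = Q x y)
        \<and> (\<forall>x\<in>S \<union> IB. \<forall>y\<in>S \<union> IB. W x y = P x y)"
  using assms
proof (induction S arbitrary: Q P rule: finite_induct)
  case empty
  define W where "W = (\<lambda>x y. if x \<in> IA \<and> y \<in> IA then Q x y else if x \<in> IB \<and> y \<in> IB then P x y else 0)"
  have "psd_on (IA \<union> IB) W" using psd_on_block_diag[of IA IB Q P] empty.prems unfolding W_def by simp
  moreover have "\<forall>x\<in>IB. \<forall>y\<in>IB. W x y = P x y" using empty.prems(5) by (auto simp: W_def)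
  moreover have "\<forall>x\<in>IA. \<forall>y\<in>IA. W x y = Q x y" by (simp add: W_def)
  ultimately show ?case by (intro exI[of _ W]) simp
next
  case (insert s S)
  have fin: "finite (IA \<union> insert s S)" "finite (insert s S \<union> IB)" using insert by auto
  have s: "s \<in> IA \<union> insert s S" "s \<in> insert s S \<union> IB" by auto
  have pQ: "psd_on (IA \<union> insert s S) Q" and pP: "psd_on (insert s S \<union> IB) P" using insert.prems by auto
  have agree: "\<forall>x\<in>insert s S. \<forall>y\<in>insert s S. Q x y = P x y" using insert.prems by blast
  have hQ: "hermitian_on (IA \<union> insert s S) Q" and hP: "hermitian_on (insert s S \<union> IB) P"
    using pQ pP psd_on_iff by blast+
  have "Im (Q s s) = 0" using psd_on_diag[OF pQ fin(1) s(1)] by simp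
  moreover have "Q s s = P s s" using agree by simp
  ultimately have "psd_on ((IA \<union> insert s S) - {s}) (schur Q s)"
    "psd_on ((insert s S \<union> IB) - {s}) (schur P s)"
    using psd_on_iff_schur[OF fin(1) s(1) hQ _ psd_on_pivot[OF pQ fin(1) s(1)]]
      psd_on_iff_schur[OF fin(2) s(2) hP _ psd_on_pivot[OF pP fin(2) s(2)]] pQ pP by simp_all
  moreover have "(IA \<union> insert s S) - {s} = IA \<union> S" "(insert s S \<union> IB) - {s} = S \<union> IB"
    using insert by auto
  moreover have "\<forall>x\<in>S. \<forall>y\<in>S. schur Q s x y = schur P s x y" using agree unfolding schur_def by auto
  ultimately obtain W' where "psd_on (IA \<union> S \<union> IB) W'"
      "\<forall>x\<in>IA \<union> S. \<forall>y\<in>IA \<union> S. W' x y = schur Q s x y"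
      "\<forall>x\<in>S \<union> IB. \<forall>y\<in>S \<union> IB. W' x y = schur P s x y"
    using insert.IH[of "schur Q s" "schur P s"] insert.prems by auto
  from psd_on_glue_pivot[OF _ _ _ pQ pP agree this] insert show ?case by blast
qed

section \<open>Walks and induced paths\<close>

lemma graph_adj_sym: "sym R \<Longrightarrow> graph_adj R x y \<Longrightarrow> graph_adj R y x"
  unfolding graph_adj_def by (meson symD)

fun walk :: "(nat \<times> nat) set \<Rightarrow> nat list \<Rightarrow> bool" where
  "walk R [] = True"
| "walk R [x] = True"
| "walk R (x # y # xs) = (graph_adj R x y \<and> walk R (y # xs))"

lemma walk_nth: "walk R xs \<longleftrightarrow> (\<forall>i. Suc i < length xs \<longrightarrow> graph_adj R (xs ! i) (xs ! Suc i))"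
proof (induction R xs rule: walk.induct)
  case (3 R x y xs)
  have "(\<forall>i. Suc i < length (x # y # xs) \<longrightarrow> graph_adj R ((x # y # xs) ! i) ((x # y # xs) ! Suc i))
      \<longleftrightarrow> graph_adj R x y \<and> (\<forall>i. Suc i < length (y # xs) \<longrightarrow> graph_adj R ((y # xs) ! i) ((y # xs) ! Suc i))"
    by (auto simp: nth_Cons split: nat.splits)
  then show ?case using 3 by simp
qed auto

lemma walk_Cons: "walk R (x # ys) \<longleftrightarrow> walk R ys \<and> (ys = [] \<or> graph_adj R x (hd ys))"
  by (cases ys) auto

lemma walk_append:
  "walk R (xs @ ys) \<longleftrightarrow> walk R xs \<and> walk R ys \<and> (xs = [] \<or> ys = [] \<or> graph_adj R (last xs) (hd ys))"
  by (induction xs) (auto simp: walk_Cons)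

lemma walk_rev: "sym R \<Longrightarrow> walk R xs \<Longrightarrow> walk R (rev xs)"
  by (induction xs) (auto simp: walk_Cons walk_append last_rev graph_adj_sym)

lemma walk_take: "walk R L \<Longrightarrow> walk R (take a L)"
  by (metis append_take_drop_id walk_append)

lemma walk_drop: "walk R L \<Longrightarrow> walk R (drop a L)"
  by (metis append_take_drop_id walk_append)

definition induced_path :: "(nat \<times> nat) set \<Rightarrow> nat list \<Rightarrow> bool" where
  "induced_path R L \<longleftrightarrow> walk R L \<and> distinct L \<and>
     (\<forall>i j. Suc i < j \<longrightarrow> j < length L \<longrightarrow> \<not> graph_adj R (L ! i) (L ! j))"

lemma walk_cut:
  assumes "walk R L" "0 < a" "a < b" "b < length L" "graph_adj R (L ! (a - 1)) (L ! b)"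
  shows "walk R (take a L @ drop b L)"
proof -
  have "last (take a L) = L ! (a - 1)" using assms by (subst last_conv_nth) (auto simp: min_def)
  moreover have "hd (drop b L) = L ! b" using assms by (simp add: hd_drop_conv_nth)
  ultimately show ?thesis using assms walk_take walk_drop by (simp add: walk_append)
qed

text \<open>A repeated vertex or a chord \<open>L ! i \<sim> L ! j\<close> lets one cut out the part strictly between.\<close>
lemma walk_shortcut:
  assumes "walk R L" "L \<noteq> []" "\<not> induced_path R L"
  obtains L' where "walk R L'" "L' \<noteq> []" "hd L' = hd L" "last L' = last L" "set L' \<subseteq> set L"
    "length L' < length L"
proof -
  obtain i j where ij: "i < j" "j < length L" and c: "L ! i = L ! j \<or> (Suc i < j \<and> graph_adj R (L ! i) (L ! j))"
    using assms(1,3) unfolding induced_path_def distinct_conv_nth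
    by (metis Suc_lessD linorder_neqE_nat)
  define k where "k = (if L ! i = L ! j then i else Suc i)"
  define L' where "L' = take k L @ drop j L"
  have k: "k \<le> i + 1" "k < j" "k = 0 \<longrightarrow> L ! 0 = L ! j" using c ij unfolding k_def by auto
  have "walk R L'"
  proof (cases "k = 0")
    case True then show ?thesis using assms(1) walk_drop unfolding L'_def by simp
  next
    case False
    have "graph_adj R (L ! (k - 1)) (L ! j)"
    proof (cases "L ! i = L ! j")
      case True
      then have "Suc (k - 1) < length L" "L ! Suc (k - 1) = L ! j" using False ij unfolding k_def by auto
      then show ?thesis using assms(1) unfolding walk_nth by metis
    qed (use c in \<open>simp add: k_def\<close>)
    then show ?thesis unfolding L'_def using walk_cut[OF assms(1), of k j] False k ij by simp
  qed
  moreover have "L' \<noteq> []" "last L' = last L" "length L' < length L" using ij k unfolding L'_def by auto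
  moreover have "hd L' = hd L"
    using k ij assms(2) unfolding L'_def by (cases "k = 0") (auto simp: hd_drop_conv_nth hd_conv_nth nth_append)
  moreover have "set L' \<subseteq> set L" unfolding L'_def using set_take_subset set_drop_subset by fastforce
  ultimately show ?thesis using that by blast
qed

lemma walk_imp_induced_path:
  assumes "walk R L" "L \<noteq> []"
  obtains L' where "induced_path R L'" "L' \<noteq> []" "hd L' = hd L" "last L' = last L" "set L' \<subseteq> set L"
  using assms
proof (induction "length L" arbitrary: L rule: less_induct)
  case less
  show ?case
  proof (cases "induced_path R L")
    case False
    then obtain L' where "walk R L'" "L' \<noteq> []" "hd L' = hd L" "last L' = last L" "set L' \<subseteq> set L"
      "length L' < length L"
      using walk_shortcut less.prems(2,3) by blast
    then show ?thesis using less.hyps less.prems(1) by (metis order_trans)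
  qed (use less.prems in blast)
qed

section \<open>Clique separators in chordal graphs\<close>

lemma is_cycle_iff:
  "is_cycle R vs \<longleftrightarrow> distinct vs \<and> 3 \<le> length vs \<and> walk R vs \<and> graph_adj R (last vs) (hd vs)"
proof -
  have "(\<forall>i<length vs. graph_adj R (vs ! i) (vs ! ((i + 1) mod length vs)))
      \<longleftrightarrow> walk R vs \<and> graph_adj R (last vs) (hd vs)" if "3 \<le> length vs"
  proof -
    define N where "N = length vs - 1"
    have N: "length vs = Suc N" using that unfolding N_def by simp
    have split: "(\<forall>i<Suc N. A i) \<longleftrightarrow> (\<forall>i<N. A i) \<and> A N" for A by (auto simp: less_Suc_eq)
    have "(i + 1) mod Suc N = Suc i" if "i < N" for i using that by simp
    then have "(\<forall>i<N. graph_adj R (vs ! i) (vs ! ((i + 1) mod Suc N)))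
        \<longleftrightarrow> (\<forall>i<N. graph_adj R (vs ! i) (vs ! Suc i))" by auto
    moreover have "vs \<noteq> []" using N by auto
    then have "last vs = vs ! N" "hd vs = vs ! 0" using N by (simp_all add: last_conv_nth hd_conv_nth)
    moreover have "walk R vs \<longleftrightarrow> (\<forall>i<N. graph_adj R (vs ! i) (vs ! Suc i))"
      unfolding walk_nth N by simp
    ultimately show ?thesis unfolding N split by simp
  qed
  then show ?thesis unfolding is_cycle_def by metis
qed

lemma chordal_obtains_chord:
  assumes "chordal n R" "sym R" "set vs \<subseteq> {1..n}" "is_cycle R vs" "4 \<le> length vs"
  obtains i j where "Suc i < j" "j < length vs" "\<not> (i = 0 \<and> j = length vs - 1)"
    "graph_adj R (vs ! i) (vs ! j)"
proof -
  let ?N = "length vs"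
  obtain i j where ij: "i < ?N" "j < ?N" "i \<noteq> j" "j \<noteq> (i + 1) mod ?N" "i \<noteq> (j + 1) mod ?N"
      "graph_adj R (vs ! i) (vs ! j)"
    using assms unfolding chordal_def has_chord_def by blast
  have *: "Suc a < b \<and> \<not> (a = 0 \<and> b = ?N - 1)"
    if "a < b" "b < ?N" "b \<noteq> (a + 1) mod ?N" "a \<noteq> (b + 1) mod ?N" for a b
  proof -
    have "(a + 1) mod ?N = a + 1" using that(1,2) by simp
    moreover have "(b + 1) mod ?N = 0" if "b = ?N - 1" using that \<open>b < ?N\<close> by (cases ?N) simp_all
    ultimately show ?thesis using that by auto
  qed
  show ?thesis
  proof (cases "i < j")
    case True then show ?thesis using * ij that by blast
  next
    case False
    then show ?thesis using *[of j i] ij that graph_adj_sym[OF assms(2)] by (metis linorder_neqE_nat)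
  qed
qed

lemma walk_length_ge_3:
  assumes "walk R P" "P \<noteq> []" "hd P \<noteq> last P" "\<not> graph_adj R (hd P) (last P)"
  shows "3 \<le> length P"
proof -
  have "length P \<noteq> 1" "length P \<noteq> 2"
    using assms by (auto simp: hd_conv_nth last_conv_nth walk_nth numeral_2_eq_2)
  then show ?thesis using assms(2) by (cases "length P") (auto simp: numeral_3_eq_3)
qed

lemma hd_butlast_tl_last:
  "xs \<noteq> [] \<Longrightarrow> hd xs \<noteq> last xs \<Longrightarrow> xs = hd xs # butlast (tl xs) @ [last xs]"
  by (cases xs) auto

context
  fixes R P Q s t
  assumes sym: "sym R"
    and P: "induced_path R P" "P \<noteq> []" "hd P = s" "last P = t"
    and Q: "induced_path R Q" "Q \<noteq> []" "hd Q = s" "last Q = t"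
    and st: "s \<noteq> t" "\<not> graph_adj R s t"
    and meet: "set P \<inter> set Q = {s, t}"
begin

private lemma Q_split:
  obtains M where "Q = s # M @ [t]" "M \<noteq> []"
proof -
  have "Q = s # butlast (tl Q) @ [t]" using hd_butlast_tl_last[of Q] Q(2-4) st(1) by metis
  moreover have "3 \<le> length Q"
    using walk_length_ge_3[of R Q] Q st unfolding induced_path_def by auto
  moreover have "length (butlast (tl Q)) = length Q - 2" by simp
  ultimately show ?thesis using that by (metis list.size(3) numeral_3_eq_3 diff_is_0_eq not_less_eq_eq numeral_2_eq_2)
qed

private lemma length_P: "3 \<le> length P"
  using walk_length_ge_3[of R P] P st unfolding induced_path_def by auto

lemma is_cycle_two_induced_paths: "is_cycle R (P @ rev (butlast (tl Q)))"
proof -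
  obtain M where QM: "Q = s # M @ [t]" and M: "M \<noteq> []" by (rule Q_split)
  then have "butlast (tl Q) = M" by simp
  have dQ: "distinct (s # M @ [t])" and wQ: "walk R (s # M @ [t])"
    using Q(1) QM unfolding induced_path_def by metis+
  have "set M \<inter> set P = {}" using dQ meet QM by auto
  then have "distinct (P @ rev M)" using dQ P(1) unfolding induced_path_def by auto
  moreover have "graph_adj R s (hd M)" "graph_adj R (last M) t" "walk R M"
    using wQ M by (auto simp: walk_Cons walk_append)
  then have "walk R (P @ rev M)" "graph_adj R (last (P @ rev M)) (hd (P @ rev M))"
    using P M sym unfolding induced_path_def
    by (auto simp: walk_append walk_rev hd_rev last_rev graph_adj_sym)
  moreover have "3 \<le> length (P @ rev M)" using length_P by simp
  ultimately show ?thesis unfolding is_cycle_iff \<open>butlast (tl Q) = M\<close> by blast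
qed

lemma chordless_two_induced_paths:
  assumes apart: "\<forall>x\<in>set P - {s, t}. \<forall>y\<in>set Q - {s, t}. \<not> graph_adj R x y"
  defines "C \<equiv> P @ rev (butlast (tl Q))"
  assumes chord: "Suc i < j" "j < length C" "\<not> (i = 0 \<and> j = length C - 1)"
    "graph_adj R (C ! i) (C ! j)"
  shows False
proof -
  obtain M where QM: "Q = s # M @ [t]" and M: "M \<noteq> []" by (rule Q_split)
  define l where "l = length P"
  define m where "m = length M"
  have C: "C = P @ rev M" "length C = l + m" using QM unfolding C_def l_def m_def by simp_all
  have l: "3 \<le> l" "P ! 0 = s" "P ! (l - 1) = t"
    using length_P P unfolding l_def by (auto simp: hd_conv_nth last_conv_nth)
  have dQ: "distinct (s # M @ [t])" using Q(1) QM unfolding induced_path_def by metis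
  have ipP: "\<not> graph_adj R (P ! a) (P ! b)" if "Suc a < b" "b < l" for a b
    using P(1) that unfolding induced_path_def l_def by blast
  have ipQ: "\<not> graph_adj R (Q ! a) (Q ! b)" if "Suc a < b" "b < m + 2" for a b
    using Q(1) that QM unfolding induced_path_def m_def by auto
  \<comment> \<open>the cycle runs forward along \<open>P\<close> and back along the interior of \<open>Q\<close>\<close>
  have CQ: "C ! k = Q ! (l + m - k)" if "l \<le> k" "k < l + m" for k
  proof -
    have "C ! k = rev M ! (k - l)" using that(1) unfolding C(1) l_def by (auto simp: nth_append)
    also have "\<dots> = M ! (m - Suc (k - l))" using that unfolding m_def by (simp add: rev_nth)
    also have "m - Suc (k - l) = l + m - k - 1" using that by simp
    also have "M ! (l + m - k - 1) = (s # M @ [t]) ! Suc (l + m - k - 1)"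
    proof -
      have "l + m - k - 1 < length M" using that unfolding m_def by linarith
      then show ?thesis by (simp add: nth_append)
    qed
    also have "Suc (l + m - k - 1) = l + m - k" using that by simp
    finally show ?thesis unfolding QM .
  qed
  have Q0: "Q ! 0 = s" and Qlast: "Q ! (m + 1) = t" using QM by (simp_all add: nth_append m_def)
  have sym': "graph_adj R x y \<Longrightarrow> graph_adj R y x" for x y using graph_adj_sym[OF sym] .
  consider "j < l" | "l \<le> i" | "i = 0" "l \<le> j" | "i = l - 1" "l \<le> j" | "0 < i" "i < l - 1" "l \<le> j"
    using chord by linarith
  then show False
  proof cases
    case 1 then show False using ipP[of i j] chord by (simp add: C(1) nth_append l_def)
  next
    case 2
    then have "C ! i = Q ! (l + m - i)" "C ! j = Q ! (l + m - j)" using CQ chord C(2) by auto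
    then show False using ipQ[of "l + m - j" "l + m - i"] sym'[OF chord(4)] chord 2 C(2) by simp
  next
    case 3
    have "C ! i = Q ! 0" using 3 l Q0 unfolding C(1) l_def by (auto simp: nth_append)
    moreover have "C ! j = Q ! (l + m - j)" using 3 CQ chord C(2) by simp
    ultimately show False using ipQ[of 0 "l + m - j"] chord 3 C(2) by simp
  next
    case 4
    have "C ! i = Q ! (m + 1)" using 4 l Qlast unfolding C(1) l_def by (auto simp: nth_append)
    moreover have "C ! j = Q ! (l + m - j)" using 4 CQ chord C(2) by simp
    ultimately show False using ipQ[of "l + m - j" "m + 1"] sym'[OF chord(4)] chord 4 C(2) by simp
  next
    case 5
    have dP: "distinct P" using P(1) unfolding induced_path_def by blast
    have "C ! i = P ! i" "i < l" using 5 unfolding C(1) l_def by (auto simp: nth_append)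
    moreover have "P ! i \<noteq> P ! 0" "P ! i \<noteq> P ! (l - 1)"
      using 5 dP \<open>i < l\<close> P(2) unfolding l_def by (simp_all add: nth_eq_iff_index_eq)
    ultimately have "C ! i \<in> set P - {s, t}" using l unfolding l_def by auto
    moreover have "C ! j = rev M ! (j - l)" "j - l < length (rev M)"
      using 5 chord(2) C(2) unfolding C(1) l_def m_def by (auto simp: nth_append)
    then have "C ! j \<in> set M" by (metis nth_mem set_rev)
    then have "C ! j \<in> set Q - {s, t}" using dQ QM by auto
    ultimately show False using apart chord by blast
  qed
qed

end


lemma chordal_no_two_induced_paths:
  assumes "chordal n R" "sym R"
    and "induced_path R P" "P \<noteq> []" "hd P = s" "last P = t"
    and "induced_path R Q" "Q \<noteq> []" "hd Q = s" "last Q = t"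
    and "s \<noteq> t" "\<not> graph_adj R s t" "set P \<inter> set Q = {s, t}"
    and "set P \<union> set Q \<subseteq> {1..n}"
    and "\<forall>x\<in>set P - {s, t}. \<forall>y\<in>set Q - {s, t}. \<not> graph_adj R x y"
  shows False
proof -
  let ?C = "P @ rev (butlast (tl Q))"
  have "is_cycle R ?C" by (rule is_cycle_two_induced_paths[OF assms(2-13)])
  moreover have "set (butlast (tl Q)) \<subseteq> set Q" by (cases Q) (auto dest: in_set_butlastD)
  then have "set ?C \<subseteq> {1..n}" using assms(14) by auto
  moreover have "3 \<le> length P" "3 \<le> length Q"
    using walk_length_ge_3[of R P] walk_length_ge_3[of R Q] assms(3-12)
    unfolding induced_path_def by auto
  then have "4 \<le> length ?C" by simp
  ultimately obtain i j where "Suc i < j" "j < length ?C" "\<not> (i = 0 \<and> j = length ?C - 1)"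
      "graph_adj R (?C ! i) (?C ! j)"
    using chordal_obtains_chord[OF assms(1,2)] by blast
  then show False using chordless_two_induced_paths[OF assms(2-13,15)] by blast
qed

definition adj_within :: "(nat \<times> nat) set \<Rightarrow> nat set \<Rightarrow> (nat \<times> nat) set" where
  "adj_within R W = {(x, y). x \<in> W \<and> y \<in> W \<and> graph_adj R x y}"

definition component :: "(nat \<times> nat) set \<Rightarrow> nat set \<Rightarrow> nat \<Rightarrow> nat set" where
  "component R W a = {y. (a, y) \<in> (adj_within R W)\<^sup>*}"

lemma sym_rtrancl_adj_within: "sym R \<Longrightarrow> sym ((adj_within R W)\<^sup>*)"
  by (rule sym_rtrancl) (auto simp: adj_within_def sym_def intro: graph_adj_sym)

lemma component_subset: "a \<in> W \<Longrightarrow> component R W a \<subseteq> W"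
proof
  fix y assume "a \<in> W" "y \<in> component R W a"
  then have "(a, y) \<in> (adj_within R W)\<^sup>*" unfolding component_def by simp
  then show "y \<in> W" using \<open>a \<in> W\<close> by (induction rule: rtrancl_induct) (auto simp: adj_within_def)
qed

lemma component_closed:
  "y \<in> component R W a \<Longrightarrow> y \<in> W \<Longrightarrow> z \<in> W \<Longrightarrow> graph_adj R y z \<Longrightarrow> z \<in> component R W a"
  unfolding component_def adj_within_def by (auto intro: rtrancl_into_rtrancl)

lemma component_eq_iff:
  assumes "sym R" "b \<in> component R W a"
  shows "component R W b = component R W a"
proof -
  have "(b, a) \<in> (adj_within R W)\<^sup>*"
    using assms sym_rtrancl_adj_within[OF assms(1)] unfolding component_def by (blast dest: symD)
  then show ?thesis using assms(2) unfolding component_def by (blast intro: rtrancl_trans)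
qed

lemma rtrancl_adj_within_walk:
  assumes "(u, w) \<in> (adj_within R W)\<^sup>*"
  obtains xs where "walk R xs" "xs \<noteq> []" "hd xs = u" "last xs = w" "set xs \<subseteq> component R W u"
proof -
  have "\<exists>xs. walk R xs \<and> xs \<noteq> [] \<and> hd xs = u \<and> last xs = w \<and> set xs \<subseteq> component R W u"
    using assms
  proof (induction rule: rtrancl_induct)
    case base
    then show ?case by (intro exI[of _ "[u]"]) (auto simp: component_def)
  next
    case (step y z)
    then obtain xs where xs: "walk R xs" "xs \<noteq> []" "hd xs = u" "last xs = y" "set xs \<subseteq> component R W u"
      by blast
    have "graph_adj R y z" using step(2) unfolding adj_within_def by simp
    then have "walk R (xs @ [z])" using xs by (simp add: walk_append)
    moreover have "z \<in> component R W u" using step(1,2) unfolding component_def by simp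
    ultimately show ?case using xs by (intro exI[of _ "xs @ [z]"]) auto
  qed
  then show ?thesis using that by blast
qed

lemma component_insert_neighbour:
  assumes "a \<in> W" "b \<in> component R (insert x W) a" "b \<notin> component R W a"
  shows "\<exists>u\<in>component R W a. graph_adj R u x"
proof -
  have "y \<in> component R W a \<or> (\<exists>u\<in>component R W a. graph_adj R u x)"
    if "(a, y) \<in> (adj_within R (insert x W))\<^sup>*" for y
    using that
  proof (induction rule: rtrancl_induct)
    case base
    then show ?case unfolding component_def by simp
  next
    case (step y z)
    then have yz: "z \<in> insert x W" "graph_adj R y z" unfolding adj_within_def by auto
    show ?case
    proof (cases "y \<in> component R W a")
      case True
      then have "y \<in> W" using component_subset[OF assms(1)] by blast
      then show ?thesis using component_closed[OF True] yz True by (cases "z = x") auto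
    qed (use step.IH in blast)
  qed
  then show ?thesis using assms(2,3) unfolding component_def by blast
qed

lemma induced_path_through_component:
  assumes "sym R" "us \<in> component R W a" "ut \<in> component R W a" "graph_adj R s us" "graph_adj R ut t"
  obtains L where "induced_path R L" "L \<noteq> []" "hd L = s" "last L = t"
    "set L \<subseteq> insert s (insert t (component R W a))"
proof -
  have "ut \<in> component R W us" using component_eq_iff[OF assms(1,2)] assms(3) by simp
  then obtain xs where xs: "walk R xs" "xs \<noteq> []" "hd xs = us" "last xs = ut" "set xs \<subseteq> component R W us"
    using rtrancl_adj_within_walk unfolding component_def by blast
  have "set xs \<subseteq> component R W a" using xs(5) component_eq_iff[OF assms(1,2)] by simp
  moreover have "walk R ([s] @ xs @ [t])"
    using xs assms(4,5) by (simp add: walk_append walk_Cons hd_append)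
  then obtain L where "induced_path R L" "L \<noteq> []" "hd L = s" "last L = t" "set L \<subseteq> set ([s] @ xs @ [t])"
    by (rule walk_imp_induced_path) auto
  ultimately show ?thesis by (intro that) auto
qed

lemma separator_vertex_neighbours:
  assumes "sym R" "a \<in> W" "b \<in> W" "b \<notin> component R W a" "b \<in> component R (insert s W) a"
  shows "(\<exists>u\<in>component R W a. graph_adj R s u) \<and> (\<exists>u\<in>component R W b. graph_adj R s u)"
proof -
  have aS: "a \<in> component R (insert s W) b"
    using component_eq_iff[OF assms(1,5)] unfolding component_def by simp
  have aB: "a \<notin> component R W b"
  proof
    assume "a \<in> component R W b"
    then have "component R W a = component R W b" using component_eq_iff[OF assms(1)] by blast
    then show False using assms(4) unfolding component_def by simp
  qed
  obtain u where "u \<in> component R W a" "graph_adj R u s"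
    using component_insert_neighbour[OF assms(2,5,4)] by blast
  moreover obtain v where "v \<in> component R W b" "graph_adj R v s"
    using component_insert_neighbour[OF assms(3) aS aB] by blast
  ultimately show ?thesis using graph_adj_sym[OF assms(1)] by blast
qed

lemma minimal_separator_clique:
  assumes "chordal n R" "sym R" "V \<subseteq> {1..n}" "S \<subseteq> V" "a \<in> V - S" "b \<in> V - S"
    and separates: "b \<notin> component R (V - S) a"
    and minimal: "\<And>x. x \<in> S \<Longrightarrow> b \<in> component R (insert x (V - S)) a"
  shows "is_clique R S"
proof -
  define W where "W = V - S"
  define A where "A = component R W a"
  define B where "B = component R W b"
  have aW: "a \<in> W" and bW: "b \<in> W" using assms(5,6) unfolding W_def by auto
  have bA: "b \<notin> A" using separates unfolding A_def W_def .
  have bB: "b \<in> B" unfolding B_def component_def by simp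
  have AW: "A \<subseteq> W" "B \<subseteq> W" using component_subset aW bW unfolding A_def B_def by blast+
  have disj: "A \<inter> B = {}"
    using component_eq_iff[OF assms(2)] bA bB unfolding A_def B_def by blast
  have apart: "\<not> graph_adj R x y" if "x \<in> A" "y \<in> B" for x y
    using component_closed[of x R W a y] that AW disj unfolding A_def by blast
  have nbrs: "(\<exists>u\<in>A. graph_adj R s u) \<and> (\<exists>u\<in>B. graph_adj R s u)" if "s \<in> S" for s
    using separator_vertex_neighbours[OF assms(2) aW bW separates[folded W_def]] minimal[OF that]
    unfolding A_def B_def W_def by blast
  show ?thesis
    unfolding is_clique_def
  proof (intro ballI impI)
    fix s t assume st: "s \<in> S" "t \<in> S" "s \<noteq> t"
    show "graph_adj R s t"
    proof (rule ccontr)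
      assume nst: "\<not> graph_adj R s t"
      obtain us vs where us: "us \<in> A" "graph_adj R s us" and vs: "vs \<in> B" "graph_adj R s vs"
        using nbrs[OF st(1)] by blast
      obtain ut vt where ut: "ut \<in> A" "graph_adj R ut t" and vt: "vt \<in> B" "graph_adj R vt t"
        using nbrs[OF st(2)] graph_adj_sym[OF assms(2)] by blast
      obtain L1 where L1: "induced_path R L1" "L1 \<noteq> []" "hd L1 = s" "last L1 = t"
          "set L1 \<subseteq> insert s (insert t A)"
        using induced_path_through_component[OF assms(2), of us W a ut s t] us ut unfolding A_def by blast
      obtain L2 where L2: "induced_path R L2" "L2 \<noteq> []" "hd L2 = s" "last L2 = t"
          "set L2 \<subseteq> insert s (insert t B)"
        using induced_path_through_component[OF assms(2), of vs W b vt s t] vs vt unfolding B_def by blast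
      have "s \<in> set L1" "t \<in> set L1" "s \<in> set L2" "t \<in> set L2"
        using L1(2-4) L2(2-4) by (metis hd_in_set last_in_set)+
      then have "set L1 \<inter> set L2 = {s, t}" using L1(5) L2(5) disj by blast
      moreover have "set L1 \<union> set L2 \<subseteq> {1..n}"
        using L1(5) L2(5) st AW assms(3,4) unfolding W_def by blast
      moreover have "\<forall>x\<in>set L1 - {s, t}. \<forall>y\<in>set L2 - {s, t}. \<not> graph_adj R x y"
        using L1(5) L2(5) apart by blast
      ultimately show False
        using chordal_no_two_induced_paths[OF assms(1,2) L1(1-4) L2(1-4) st(3) nst] by blast
    qed
  qed
qed

lemma clique_separator:
  assumes "chordal n R" "sym R" "V \<subseteq> {1..n}" "a \<in> V" "b \<in> V" "a \<noteq> b" "\<not> graph_adj R a b"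
  obtains A S B where "V = A \<union> S \<union> B" "A \<inter> S = {}" "B \<inter> S = {}" "A \<inter> B = {}" "a \<in> A" "b \<in> B"
    "is_clique R S" "\<forall>i\<in>A. \<forall>j\<in>B. (i, j) \<notin> R"
proof -
  define separating where "separating S \<longleftrightarrow> S \<subseteq> V - {a, b} \<and> b \<notin> component R (V - S) a" for S
  have "separating (V - {a, b})"
  proof -
    have "(a, y) \<in> (adj_within R {a, b})\<^sup>* \<Longrightarrow> y = a" for y
      by (induction rule: rtrancl_induct) (use assms(7) in \<open>auto simp: adj_within_def graph_adj_def\<close>)
    moreover have "V - (V - {a, b}) = {a, b}" using assms(4,5) by auto
    ultimately show ?thesis using assms(6) unfolding separating_def component_def by auto
  qed
  then obtain S where S: "separating S" and Smin: "\<And>S'. separating S' \<Longrightarrow> card S \<le> card S'"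
    using ex_has_least_nat[of separating "V - {a, b}" card] by blast
  have SV: "S \<subseteq> V - {a, b}" and bS: "b \<notin> component R (V - S) a" using S unfolding separating_def by auto
  have finS: "finite S" using SV assms(3) finite_subset by (metis finite_Diff finite_atLeastAtMost)
  have "b \<in> component R (insert x (V - S)) a" if "x \<in> S" for x
  proof -
    have "\<not> separating (S - {x})" using Smin card_Diff1_less[OF finS that] by (meson not_le)
    moreover have "V - (S - {x}) = insert x (V - S)" using that SV by auto
    ultimately show ?thesis using SV unfolding separating_def by auto
  qed
  then have "is_clique R S"
    using minimal_separator_clique[OF assms(1-3), of S a b] SV bS assms(4,5) by blast
  define A where "A = component R (V - S) a"
  define B where "B = (V - S) - A"
  have AV: "A \<subseteq> V - S" using component_subset[of a "V - S" R] SV assms(4) unfolding A_def by blast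
  have "a \<in> A" unfolding A_def component_def by simp
  moreover have "b \<in> B" using bS SV assms(5) unfolding A_def B_def by auto
  moreover have "(i, j) \<notin> R" if "i \<in> A" "j \<in> B" for i j
  proof
    assume "(i, j) \<in> R"
    moreover have "i \<noteq> j" using that unfolding B_def by auto
    ultimately have "j \<in> A"
      using component_closed[of i R "V - S" a j] that AV unfolding A_def B_def graph_adj_def by blast
    then show False using that unfolding B_def by simp
  qed
  moreover have "V = A \<union> S \<union> B" "A \<inter> S = {}" "B \<inter> S = {}" "A \<inter> B = {}"
    using AV SV unfolding B_def by auto
  ultimately show ?thesis using that \<open>is_clique R S\<close> by blast
qed

section \<open>Positive completion\<close>

lemma psd_on_glue_product:
  assumes "finite K" "finite A" "finite S" "finite B" "A \<inter> S = {}" "B \<inter> S = {}" "A \<inter> B = {}"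
    and "psd_on (K \<times> (A \<union> S)) Z1" "psd_on (K \<times> (S \<union> B)) Z2"
    and "\<forall>x\<in>K \<times> S. \<forall>y\<in>K \<times> S. Z1 x y = Z2 x y"
  obtains W where "psd_on (K \<times> (A \<union> S \<union> B)) W"
    "\<forall>x\<in>K \<times> (A \<union> S). \<forall>y\<in>K \<times> (A \<union> S). W x y = Z1 x y"
    "\<forall>x\<in>K \<times> (S \<union> B). \<forall>y\<in>K \<times> (S \<union> B). W x y = Z2 x y"
proof -
  have "K \<times> (A \<union> S) = K \<times> A \<union> K \<times> S" "K \<times> (S \<union> B) = K \<times> S \<union> K \<times> B"
    "K \<times> (A \<union> S \<union> B) = K \<times> A \<union> K \<times> S \<union> K \<times> B" by auto
  moreover have "K \<times> A \<inter> K \<times> S = {}" "K \<times> B \<inter> K \<times> S = {}" "K \<times> A \<inter> K \<times> B = {}"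
    using assms(5-7) by auto
  ultimately obtain W where "psd_on (K \<times> (A \<union> S \<union> B)) W"
      "\<forall>x\<in>K \<times> (A \<union> S). \<forall>y\<in>K \<times> (A \<union> S). W x y = Z1 x y"
      "\<forall>x\<in>K \<times> (S \<union> B). \<forall>y\<in>K \<times> (S \<union> B). W x y = Z2 x y"
    using psd_on_glue[of "K \<times> S" "K \<times> A" "K \<times> B" Z1 Z2] assms(1-4,8-10) by (metis finite_SigmaI)
  then show ?thesis by (rule that)
qed

lemma clique_in_R:
  assumes "tolerance_relation n R" "C \<subseteq> {1..n}" "is_clique R C" "i \<in> C" "j \<in> C"
  shows "(i, j) \<in> R"
  using assms unfolding tolerance_relation_def refl_on_def is_clique_def graph_adj_def
  by (cases "i = j") blast+

text \<open>Induction on \<open>V\<close>: split along a clique separator, complete both sides, and glue.\<close>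
lemma psd_completion:
  fixes Mf :: "nat \<times> nat \<Rightarrow> nat \<times> nat \<Rightarrow> complex"
  assumes tol: "tolerance_relation n R" and ch: "chordal n R"
    and "finite V" "V \<subseteq> {1..n}"
    and "\<And>C. C \<subseteq> V \<Longrightarrow> is_clique R C \<Longrightarrow> psd_on ({..<m} \<times> C) Mf"
  shows "\<exists>Z. psd_on ({..<m} \<times> V) Z \<and>
    (\<forall>k<m. \<forall>l<m. \<forall>i\<in>V. \<forall>j\<in>V. (i, j) \<in> R \<longrightarrow> Z (k, i) (l, j) = Mf (k, i) (l, j))"
  using assms(3-5)
proof (induction V rule: finite_psubset_induct)
  case (psubset V)
  have symR: "sym R" using tol unfolding tolerance_relation_def by blast
  show ?case
  proof (cases "is_clique R V")
    case True
    then show ?thesis using psubset.prems by blast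
  next
    case False
    then obtain a b where ab: "a \<in> V" "b \<in> V" "a \<noteq> b" "\<not> graph_adj R a b"
      unfolding is_clique_def by blast
    obtain A S B where sep: "V = A \<union> S \<union> B" "A \<inter> S = {}" "B \<inter> S = {}" "A \<inter> B = {}" "a \<in> A" "b \<in> B"
        "is_clique R S" "\<forall>i\<in>A. \<forall>j\<in>B. (i, j) \<notin> R"
      using clique_separator[OF ch symR psubset.prems(1) ab] by blast
    have fin: "finite A" "finite S" "finite B" using psubset.hyps sep(1) by auto
    have sub: "A \<union> S \<subseteq> {1..n}" "S \<union> B \<subseteq> {1..n}" using psubset.prems(1) sep(1) by blast+
    have "A \<union> S \<subset> V" using sep by blast
    then obtain Z1 where Z1: "psd_on ({..<m} \<times> (A \<union> S)) Z1"
        "\<forall>k<m. \<forall>l<m. \<forall>i\<in>A \<union> S. \<forall>j\<in>A \<union> S. (i, j) \<in> R \<longrightarrow> Z1 (k, i) (l, j) = Mf (k, i) (l, j)"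
    proof (elim psubset.IH[OF _ sub(1), elim_format] exE conjE)
      show "psd_on ({..<m} \<times> C) Mf" if "C \<subseteq> A \<union> S" "is_clique R C" for C
        using psubset.prems(2) that sep(1) by blast
    qed
    have "S \<union> B \<subset> V" using sep by blast
    then obtain Z2 where Z2: "psd_on ({..<m} \<times> (S \<union> B)) Z2"
        "\<forall>k<m. \<forall>l<m. \<forall>i\<in>S \<union> B. \<forall>j\<in>S \<union> B. (i, j) \<in> R \<longrightarrow> Z2 (k, i) (l, j) = Mf (k, i) (l, j)"
    proof (elim psubset.IH[OF _ sub(2), elim_format] exE conjE)
      show "psd_on ({..<m} \<times> C) Mf" if "C \<subseteq> S \<union> B" "is_clique R C" for C
        using psubset.prems(2) that sep(1) by blast
    qed
    \<comment> \<open>on the separator every entry belongs to the pattern, so the two completions agree there\<close>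
    have "(i, j) \<in> R" if "i \<in> S" "j \<in> S" for i j
      using clique_in_R[OF tol _ sep(7) that] psubset.prems(1) sep(1) by blast
    then have "\<forall>x\<in>{..<m} \<times> S. \<forall>y\<in>{..<m} \<times> S. Z1 x y = Z2 x y" using Z1(2) Z2(2) by fastforce
    then obtain W where W: "psd_on ({..<m} \<times> (A \<union> S \<union> B)) W"
        "\<forall>x\<in>{..<m} \<times> (A \<union> S). \<forall>y\<in>{..<m} \<times> (A \<union> S). W x y = Z1 x y"
        "\<forall>x\<in>{..<m} \<times> (S \<union> B). \<forall>y\<in>{..<m} \<times> (S \<union> B). W x y = Z2 x y"
      using psd_on_glue_product[OF _ fin(1,2,3) sep(2-4) Z1(1) Z2(1)] by blast
    have "W (k, i) (l, j) = Mf (k, i) (l, j)"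
      if "k < m" "l < m" "i \<in> V" "j \<in> V" "(i, j) \<in> R" for k l i j
    proof -
      have "(j, i) \<in> R" using that(5) symR by (meson symD)
      then have "\<not> (i \<in> A \<and> j \<in> B)" "\<not> (i \<in> B \<and> j \<in> A)" using sep(8) that(5) by blast+
      moreover have "i \<in> A \<union> S \<union> B" "j \<in> A \<union> S \<union> B" using sep(1) that(3,4) by simp_all
      ultimately consider "i \<in> A \<union> S" "j \<in> A \<union> S" | "i \<in> S \<union> B" "j \<in> S \<union> B" by blast
      then show ?thesis
      proof cases
        case 1
        then have "W (k, i) (l, j) = Z1 (k, i) (l, j)" using W(2) that(1,2) by simp
        also have "\<dots> = Mf (k, i) (l, j)" using Z1(2) 1 that by simp
        finally show ?thesis .
      next
        case 2
        then have "W (k, i) (l, j) = Z2 (k, i) (l, j)" using W(3) that(1,2) by simp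
        also have "\<dots> = Mf (k, i) (l, j)" using Z2(2) 2 that by simp
        finally show ?thesis .
      qed
    qed
    moreover have "psd_on ({..<m} \<times> V) W" using W(1) sep(1) by simp
    ultimately show ?thesis by blast
  qed
qed

section \<open>The dual operator system\<close>

lemma maximal_cliques_subset: "C \<in> maximal_cliques n R \<Longrightarrow> C \<subseteq> {1..n} \<and> is_clique R C"
  unfolding maximal_cliques_def by blast

lemma finite_maximal_cliques: "finite (maximal_cliques n R)"
  by (rule finite_subset[of _ "Pow {1..n}"]) (auto simp: maximal_cliques_def)

lemma maximal_clique_exists:
  assumes "C \<subseteq> {1..n}" "is_clique R C"
  obtains C0 where "C0 \<in> maximal_cliques n R" "C \<subseteq> C0"
proof -
  define F where "F = {D. C \<subseteq> D \<and> D \<subseteq> {1..n} \<and> is_clique R D}"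
  have "finite F" unfolding F_def by (rule finite_subset[of _ "Pow {1..n}"]) auto
  moreover have "C \<in> F" using assms unfolding F_def by blast
  ultimately obtain M where "M \<in> F" "\<forall>D\<in>F. M \<subseteq> D \<longrightarrow> M = D"
    using finite_has_maximal by blast
  moreover from this have "M \<in> maximal_cliques n R" unfolding maximal_cliques_def F_def by auto
  ultimately show ?thesis using that unfolding F_def by blast
qed

lemma inj_on_Phi_m:
  assumes "tolerance_relation n R"
  shows "inj_on (Phi_m n R m) (Mm_E n R m)"
proof
  fix M M' assume M: "M \<in> Mm_E n R m" and M': "M' \<in> Mm_E n R m"
    and eq: "Phi_m n R m M = Phi_m n R m M'"
  have "M k l i j = M' k l i j" for k l i j
  proof (cases "k < m \<and> l < m \<and> i \<in> {1..n} \<and> j \<in> {1..n} \<and> (i, j) \<in> R")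
    case True
    \<comment> \<open>every pattern entry is seen by some maximal clique\<close>
    have "is_clique R {i, j}"
      using True assms unfolding is_clique_def graph_adj_def tolerance_relation_def by (auto dest: symD)
    then obtain C where C: "C \<in> maximal_cliques n R" "{i, j} \<subseteq> C"
      using maximal_clique_exists[of "{i, j}" n R] True by auto
    have "Phi_m n R m M k l C i j = M k l i j" "Phi_m n R m M' k l C i j = M' k l i j"
      using True C unfolding Phi_m_def Phi_def by auto
    then show ?thesis using eq by metis
  next
    case False
    then have "M k l i j = 0" "M' k l i j = 0" using M M' unfolding Mm_E_def by blast+
    then show ?thesis by simp
  qed
  then show "M = M'" by (intro ext)
qed

lemma dsum_pos_Phi_m_iff:
  "dsum_pos n R m (Phi_m n R m M) \<longleftrightarrow>
     (\<forall>C\<in>maximal_cliques n R. psd_on ({..<m} \<times> C) (\<lambda>(k, i) (l, j). M k l i j))"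
proof -
  define MC where "MC = maximal_cliques n R"
  define D where "D = {(k, C, i). k < m \<and> C \<in> MC \<and> i \<in> C}"
  define Bk where "Bk = (\<lambda>(k, C, i) (l, D, j). if C = D then Phi_m n R m M k l C i j else 0)"
  define Mf where "Mf = (\<lambda>(k::nat, i::nat) (l::nat, j::nat). M k l i j)"
  have ds: "dsum_pos n R m (Phi_m n R m M) \<longleftrightarrow> psd_on D Bk"
    unfolding dsum_pos_def D_def Bk_def MC_def by simp
  have finD: "finite D"
  proof (rule finite_subset)
    show "D \<subseteq> {..<m} \<times> MC \<times> {1..n}" unfolding D_def MC_def using maximal_cliques_subset by auto
    show "finite ({..<m} \<times> MC \<times> {1..n})" using finite_maximal_cliques unfolding MC_def by auto
  qed
  define f where "f C = (\<lambda>(k::nat, i::nat). (k, C, i))" for C :: "nat set"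
  have blk: "psd_on {x \<in> D. fst (snd x) = C} Bk \<longleftrightarrow> psd_on ({..<m} \<times> C) Mf" if "C \<in> MC" for C
  proof -
    have inj: "inj_on (f C) ({..<m} \<times> C)" unfolding f_def inj_on_def by auto
    have "f C ` ({..<m} \<times> C) = {x \<in> D. fst (snd x) = C}"
      using that unfolding f_def D_def by force
    then have "psd_on {x \<in> D. fst (snd x) = C} Bk
        \<longleftrightarrow> psd_on ({..<m} \<times> C) (\<lambda>x y. Bk (f C x) (f C y))"
      using psd_on_reindex[OF inj, of Bk] by simp
    also have "\<dots> \<longleftrightarrow> psd_on ({..<m} \<times> C) Mf"
    proof -
      have "Bk (f C x) (f C y) = Mf x y" if "x \<in> {..<m} \<times> C" "y \<in> {..<m} \<times> C" for x y
        using that \<open>C \<in> MC\<close> unfolding Bk_def f_def Mf_def Phi_m_def Phi_def MC_def by auto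
      then show ?thesis using psd_on_cong by (metis (no_types, lifting))
    qed
    finally show ?thesis .
  qed
  have "psd_on D Bk \<longleftrightarrow> (\<forall>C\<in>MC. psd_on ({..<m} \<times> C) Mf)"
  proof
    assume p: "psd_on D Bk"
    show "\<forall>C\<in>MC. psd_on ({..<m} \<times> C) Mf"
    proof
      fix C assume "C \<in> MC"
      have "psd_on {x \<in> D. fst (snd x) = C} Bk" by (rule psd_on_subset[OF p finD]) auto
      then show "psd_on ({..<m} \<times> C) Mf" using blk[OF \<open>C \<in> MC\<close>] by simp
    qed
  next
    assume p: "\<forall>C\<in>MC. psd_on ({..<m} \<times> C) Mf"
    show "psd_on D Bk"
    proof (rule psd_on_blocks[OF finD, of "\<lambda>x. fst (snd x)"])
      show "Bk x y = 0" if "x \<in> D" "y \<in> D" "fst (snd x) \<noteq> fst (snd y)" for x y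
        using that unfolding Bk_def by (auto split: prod.splits)
      show "psd_on {x \<in> D. fst (snd x) = C} Bk" if "C \<in> (\<lambda>x. fst (snd x)) ` D" for C
      proof -
        have "C \<in> MC" using that unfolding D_def by auto
        then show ?thesis using blk p by blast
      qed
    qed
  qed
  then show ?thesis using ds unfolding MC_def Mf_def by simp
qed

lemma dual_pos_imp_clique_blocks:
  assumes tol: "tolerance_relation n R" and "dual_pos n R m M" "C \<in> maximal_cliques n R"
  shows "psd_on ({..<m} \<times> C) (\<lambda>(k, i) (l, j). M k l i j)"
proof -
  obtain N where N: "N \<in> Mm_Eperp n R m"
    "psd_on ({..<m} \<times> {1..n}) (\<lambda>(k, i) (l, j). M k l i j + N k l i j)"
    using assms(2) unfolding dual_pos_def by blast
  have Cs: "C \<subseteq> {1..n}" "is_clique R C" using maximal_cliques_subset[OF assms(3)] by auto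
  have "psd_on ({..<m} \<times> C) (\<lambda>(k, i) (l, j). M k l i j + N k l i j)"
    by (rule psd_on_subset[OF N(2)]) (use Cs in auto)
  moreover have "N k l i j = 0" if "i \<in> C" "j \<in> C" for k l i j
    using clique_in_R[OF tol Cs that] N(1) unfolding Mm_Eperp_def by blast
  ultimately show ?thesis by (elim psd_on_cong) (auto split: prod.splits)
qed

text \<open>The entries outside the pattern are supplied by a positive completion.\<close>
lemma clique_blocks_imp_dual_pos:
  assumes tol: "tolerance_relation n R" and ch: "chordal n R" and M: "M \<in> Mm_E n R m"
    and p: "\<forall>C\<in>maximal_cliques n R. psd_on ({..<m} \<times> C) (\<lambda>(k, i) (l, j). M k l i j)"
  shows "dual_pos n R m M"
proof -
  define Mf where "Mf = (\<lambda>(k::nat, i::nat) (l::nat, j::nat). M k l i j)"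
  have "psd_on ({..<m} \<times> C) Mf" if C: "C \<subseteq> {1..n}" "is_clique R C" for C
  proof -
    obtain C0 where C0: "C0 \<in> maximal_cliques n R" "C \<subseteq> C0" by (rule maximal_clique_exists[OF C])
    have "finite C0" using maximal_cliques_subset[OF C0(1)] finite_subset by blast
    then show ?thesis using psd_on_subset[of "{..<m} \<times> C0" Mf "{..<m} \<times> C"] p C0 unfolding Mf_def by auto
  qed
  then obtain Z where Z: "psd_on ({..<m} \<times> {1..n}) Z"
    "\<forall>k<m. \<forall>l<m. \<forall>i\<in>{1..n}. \<forall>j\<in>{1..n}. (i, j) \<in> R \<longrightarrow> Z (k, i) (l, j) = Mf (k, i) (l, j)"
    using psd_completion[OF tol ch, of "{1..n}" m Mf] by auto
  define N where "N k l i j = (if k < m \<and> l < m \<and> i \<in> {1..n} \<and> j \<in> {1..n} \<and> (i, j) \<notin> R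
      then Z (k, i) (l, j) else 0)" for k l i j
  have "N \<in> Mm_Eperp n R m" unfolding Mm_Eperp_def N_def by auto
  moreover have "psd_on ({..<m} \<times> {1..n}) (\<lambda>(k, i) (l, j). M k l i j + N k l i j)"
    using Z(1)
  proof (rule psd_on_cong)
    fix x y assume "x \<in> {..<m} \<times> {1..n}" "y \<in> {..<m} \<times> {1..n}"
    then obtain k i l j where kl: "x = (k, i)" "y = (l, j)" "k < m" "l < m" "i \<in> {1..n}" "j \<in> {1..n}"
      by auto
    show "Z x y = (\<lambda>(k, i) (l, j). M k l i j + N k l i j) x y"
    proof (cases "(i, j) \<in> R")
      case True
      then show ?thesis using Z(2) kl unfolding N_def Mf_def by auto
    next
      case False
      then have "M k l i j = 0" using M unfolding Mm_E_def by blast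
      then show ?thesis using False kl unfolding N_def by auto
    qed
  qed
  ultimately show "dual_pos n R m M" unfolding dual_pos_def using M by blast
qed

theorem mainTheorem2:
  fixes n :: nat and R :: "(nat \<times> nat) set"
  assumes "tolerance_relation n R"
    and "chordal n R"
  shows "\<forall>m. inj_on (Phi_m n R m) (Mm_E n R m) \<and>
           (\<forall>M \<in> Mm_E n R m. dual_pos n R m M \<longleftrightarrow> dsum_pos n R m (Phi_m n R m M))"
proof (intro allI conjI ballI)
  fix m
  show "inj_on (Phi_m n R m) (Mm_E n R m)" by (rule inj_on_Phi_m[OF assms(1)])
  fix M assume "M \<in> Mm_E n R m"
  then show "dual_pos n R m M \<longleftrightarrow> dsum_pos n R m (Phi_m n R m M)"
    unfolding dsum_pos_Phi_m_iff
    using dual_pos_imp_clique_blocks[OF assms(1)] clique_blocks_imp_dual_pos[OF assms] by blast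
qed

end
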